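(* Let $n\ge1$, $R>0$, and let $\omega\subset\mathbb{R}^n$ be a measurable set with $|\omega\cap B(0,R)|>0$. Then for every complex polynomial $P\in\mathbb{C}[X_1,\dots,X_n]$ of degree $d$, $$\|P\|_{L^2(B(0,R))}\le\frac{2^{2d+1}}{\sqrt3}\sqrt{\frac{4|B(0,R)|}{|\omega\cap B(0,R)|}}\left(\frac{1+\big(1-\frac{|\omega\cap B(0,R)|}{4|B(0,R)|}\big)^{1/n}}{1-\big(1-\frac{|\omega\cap B(0,R)|}{4|B(0,R)|}\big)^{1/n}}\right)^{d}\|P\|_{L^2(\omega\cap B(0,R))}.$$
   Context: $B(0,R)$ is the open Euclidean ball in $\mathbb{R}^n$ of radius $R$ centered at $0$ and $|\cdot|$ denotes Lebesgue measure. *)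

theory Defs
  imports "HOL-Analysis.Analysis"
begin

text \<open>Complex polynomials in n real variables, represented by their coefficient
  function on multi-indices (alpha :: 'n => nat), required to have finite support.\<close>

definition mpoly_support :: "(('n::finite \<Rightarrow> nat) \<Rightarrow> complex) \<Rightarrow> ('n \<Rightarrow> nat) set" where
  "mpoly_support c = {\<alpha>. c \<alpha> \<noteq> 0}"

definition mpoly_eval :: "(('n::finite \<Rightarrow> nat) \<Rightarrow> complex) \<Rightarrow> real^'n \<Rightarrow> complex" where
  "mpoly_eval c x = (\<Sum>\<alpha>\<in>mpoly_support c. c \<alpha> * (\<Prod>i\<in>UNIV. complex_of_real (x $ i) ^ \<alpha> i))"

definition mpoly_degree :: "(('n::finite \<Rightarrow> nat) \<Rightarrow> complex) \<Rightarrow> nat" where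
  "mpoly_degree c = Max ((\<lambda>\<alpha>. \<Sum>i\<in>UNIV. \<alpha> i) ` mpoly_support c)"

definition L2_norm_on :: "'a::euclidean_space set \<Rightarrow> ('a \<Rightarrow> complex) \<Rightarrow> real" where
  "L2_norm_on A f = sqrt (LINT x:A|lebesgue. (cmod (f x))\<^sup>2)"

end

theory Submission
  imports Defs "HOL-Computational_Algebra.Polynomial"
begin

text \<open>
  Let \<open>E\<close> be a subset of the ball \<open>B\<close> of relative measure \<open>\<mu>\<close> and
  \<open>x\<^sub>0 \<in> B\<close>. The homothetic copies \<open>x\<^sub>0 + r\<^sup>k (B - x\<^sub>0)\<close> with \<open>r = 1 - \<eta>\<close> cut \<open>B\<close> into shells,
  each the image of the outermost one; rescaling the parts of \<open>E\<close> in these shells back to the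
  outermost shell and counting multiplicities yields a point \<open>y\<close> such that the ray from \<open>x\<^sub>0\<close>
  through \<open>y\<close> meets \<open>E\<close> in \<open>d + 1\<close> points \<open>x\<^sub>0 + r\<^sup>k (y - x\<^sub>0)\<close>. Lagrange interpolation of the
  restriction of \<open>P\<close> to this line at the geometric nodes \<open>r\<^sup>k\<close> gives
  \<open>|P(x\<^sub>0)| \<le> (15 n / \<mu>)\<^sup>d sup\<^sub>E |P|\<close>.

  By Markov's inequality the sublevel set \<open>{x \<in> \<omega> \<inter> B. |P x|\<^sup>2 \<le> c}\<close> has at least three
  quarters of the measure of \<open>\<omega> \<inter> B\<close> as soon as \<open>c > 4 \<parallel>P\<parallel>\<^sup>2 / |\<omega> \<inter> B|\<close>; applying the Remez
  bound to it and integrating over \<open>B\<close> gives the \<open>L\<^sup>2\<close> estimate, whose constant is compared with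
  the stated one using Bernoulli's inequality.
\<close>

definition lagrange_basis :: "(nat \<Rightarrow> 'a::field) \<Rightarrow> nat \<Rightarrow> nat \<Rightarrow> 'a poly" where
  "lagrange_basis s d i = (\<Prod>j\<in>{..d}-{i}. smult (1 / (s i - s j)) [:- s j, 1:])"

lemma poly_lagrange_basis:
  "poly (lagrange_basis s d i) z = (\<Prod>j\<in>{..d}-{i}. (z - s j) / (s i - s j))"
  unfolding lagrange_basis_def by (simp add: poly_prod diff_divide_distrib)

lemma degree_lagrange_basis_le:
  assumes "i \<le> d"
  shows "degree (lagrange_basis s d i) \<le> d"
proof -
  have "degree (lagrange_basis s d i) \<le> (\<Sum>j\<in>{..d}-{i}. degree (smult (1 / (s i - s j)) [:- s j, 1:]))"
    unfolding lagrange_basis_def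
    using degree_prod_sum_le[of "{..d}-{i}" "\<lambda>j. smult (1 / (s i - s j)) [:- s j, 1:]"]
    by (simp only: o_def finite_Diff finite_atMost)
  also have "\<dots> \<le> (\<Sum>j\<in>{..d}-{i}. 1)"
    by (intro sum_mono order_trans[OF degree_smult_le]) simp
  also have "\<dots> = d"
    using assms by simp
  finally show ?thesis .
qed

lemma poly_lagrange_basis_node:
  assumes "inj_on s {..d}" "i \<le> d" "l \<le> d"
  shows "poly (lagrange_basis s d i) (s l) = (if i = l then 1 else 0)"
proof (cases "i = l")
  case True
  have "(s l - s j) / (s i - s j) = 1" if "j \<in> {..d}-{i}" for j
    using assms that True unfolding inj_on_def by auto
  then show ?thesis
    using True by (simp add: poly_lagrange_basis prod.neutral)
next
  case False
  then show ?thesis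
    using assms(3) by (auto simp: poly_lagrange_basis intro!: prod_zero bexI[of _ l])
qed

lemma poly_lagrange_interpolation:
  fixes q :: "'a::field poly" and s :: "nat \<Rightarrow> 'a"
  assumes "degree q \<le> d" "inj_on s {..d}"
  shows "poly q z = (\<Sum>i\<le>d. poly q (s i) * (\<Prod>j\<in>{..d}-{i}. (z - s j) / (s i - s j)))"
proof -
  define L where "L = (\<Sum>i\<le>d. smult (poly q (s i)) (lagrange_basis s d i))"
  have "degree L \<le> d"
    unfolding L_def
  proof (rule degree_sum_le)
    fix i assume "i \<in> {..d}"
    then show "degree (smult (poly q (s i)) (lagrange_basis s d i)) \<le> d"
      using degree_smult_le[of "poly q (s i)" "lagrange_basis s d i"] degree_lagrange_basis_le[of i d s]
      by simp
  qed simp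
  have "q = L"
  proof (rule poly_eqI_degree[where A = "s ` {..d}"])
    fix x assume "x \<in> s ` {..d}"
    then obtain l where l: "l \<le> d" "x = s l" by auto
    have "poly L x = (\<Sum>i\<le>d. if i = l then poly q (s l) else 0)"
      unfolding L_def l(2) poly_sum poly_smult
      by (intro sum.cong refl) (simp add: poly_lagrange_basis_node[OF assms(2) _ l(1)])
    then show "poly q x = poly L x"
      using l by simp
  next
    have "card (s ` {..d}) = d + 1"
      using assms(2) by (simp add: card_image)
    then show "degree q < card (s ` {..d})" "degree L < card (s ` {..d})"
      using assms(1) \<open>degree L \<le> d\<close> by auto
  qed
  then have "poly q z = poly L z"
    by simp
  also have "\<dots> = (\<Sum>i\<le>d. poly q (s i) * (\<Prod>j\<in>{..d}-{i}. (z - s j) / (s i - s j)))"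
    unfolding L_def by (simp add: poly_sum poly_lagrange_basis)
  finally show ?thesis .
qed

lemma strict_mono_on_atMost_diff_le:
  fixes k :: "nat \<Rightarrow> nat"
  assumes "\<And>i j. i < j \<Longrightarrow> j \<le> d \<Longrightarrow> k i < k j" "i \<le> j" "j \<le> d"
  shows "j - i \<le> k j - k i"
  using assms(2,3)
proof (induction j)
  case (Suc j)
  show ?case
  proof (cases "i = Suc j")
    case False
    then have "i \<le> j" "j - i \<le> k j - k i"
      using Suc by simp_all
    moreover have "k j < k (Suc j)" "k i \<le> k j"
      using assms(1)[of j "Suc j"] assms(1)[of i j] \<open>i \<le> j\<close> Suc.prems by (auto simp: le_less)
    ultimately show ?thesis by linarith
  qed simp
qed simp

lemma inverse_one_minus_power_le:
  fixes \<eta> :: real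
  assumes "0 < \<eta>" "\<eta> < 1" "1 \<le> m"
  shows "1 / (1 - (1 - \<eta>) ^ m) \<le> (1 + m * \<eta>) / (m * \<eta>)"
proof -
  have m\<eta>: "0 < real m * \<eta>"
    using assms by simp
  have "(1 - \<eta>) ^ m * (1 + m * \<eta>) \<le> (1 - \<eta>) ^ m * (1 + \<eta>) ^ m"
    using Bernoulli_inequality[of \<eta> m] assms by (intro mult_left_mono) auto
  also have "\<dots> = (1 - \<eta>\<^sup>2) ^ m"
    by (simp add: power_mult_distrib[symmetric] power2_eq_square algebra_simps)
  also have "\<dots> \<le> 1"
    using assms by (intro power_le_one) (auto simp: power2_eq_square mult_le_one)
  finally have "m * \<eta> / (1 + m * \<eta>) \<le> 1 - (1 - \<eta>) ^ m"
    using m\<eta> by (simp add: field_simps)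
  moreover have "0 < m * \<eta> / (1 + m * \<eta>)"
    using m\<eta> by simp
  ultimately have "1 / (1 - (1 - \<eta>) ^ m) \<le> 1 / (m * \<eta> / (1 + m * \<eta>))"
    by (intro divide_left_mono mult_pos_pos) auto
  then show ?thesis
    by simp
qed

lemma power_ratio_le:
  fixes r :: real
  assumes "0 < r" "r < 1" "a + m \<le> b" "1 \<le> m"
  shows "r ^ a / (r ^ a - r ^ b) \<le> 1 / (1 - r ^ m)" and "r ^ b / (r ^ a - r ^ b) \<le> 1 / (1 - r ^ m)"
proof -
  have "r ^ (b - a) \<le> r ^ m" "r ^ m < 1"
    using assms by (auto intro: power_decreasing simp: power_less_one_iff)
  then have pos: "0 < 1 - r ^ (b - a)" "1 - r ^ m \<le> 1 - r ^ (b - a)"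
    by auto
  have "r ^ a - r ^ b = r ^ a * (1 - r ^ (b - a))"
    using assms by (simp add: algebra_simps flip: power_add)
  then have "r ^ a / (r ^ a - r ^ b) = 1 / (1 - r ^ (b - a))"
    using assms(1) pos(1) by simp
  also have "\<dots> \<le> 1 / (1 - r ^ m)"
    using pos \<open>r ^ m < 1\<close> by (intro divide_left_mono) auto
  finally show ra: "r ^ a / (r ^ a - r ^ b) \<le> 1 / (1 - r ^ m)" .
  have "r ^ b < r ^ a"
    using assms by (intro power_strict_decreasing) auto
  then have "r ^ b / (r ^ a - r ^ b) \<le> r ^ a / (r ^ a - r ^ b)"
    by (intro divide_right_mono) auto
  with ra show "r ^ b / (r ^ a - r ^ b) \<le> 1 / (1 - r ^ m)"
    by linarith
qed

lemma geometric_lagrange_factor_le: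
  fixes \<eta> :: real and k :: "nat \<Rightarrow> nat"
  assumes \<eta>: "0 < \<eta>" "\<eta> \<le> 2/3" "real d * \<eta> \<le> 2/3"
    and k: "\<And>i j. i < j \<Longrightarrow> j \<le> d \<Longrightarrow> k i < k j"
    and ij: "i \<le> d" "j \<le> d" "i \<noteq> j"
  shows "\<bar>(1 - \<eta>) ^ k j / ((1 - \<eta>) ^ k i - (1 - \<eta>) ^ k j)\<bar>
      \<le> (5/3) / (\<eta> * real (if j < i then i - j else j - i))"
proof -
  define r where "r = 1 - \<eta>"
  define m where "m = (if j < i then i - j else j - i)"
  have r: "0 < r" "r < 1" and m: "1 \<le> m" "m \<le> d"
    using \<eta> ij unfolding r_def m_def by auto
  have "\<bar>r ^ k j / (r ^ k i - r ^ k j)\<bar> \<le> 1 / (1 - r ^ m)"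
  proof (cases "j < i")
    case True
    have "i - j \<le> k i - k j" "k j < k i"
      using strict_mono_on_atMost_diff_le[where k=k and d=d and i=j and j=i, OF k] k[OF True] True ij
      by auto
    then have "k j + m \<le> k i" "r ^ k i < r ^ k j"
      using True r by (auto simp: m_def intro: power_strict_decreasing)
    then show ?thesis
      using power_ratio_le(1)[OF r _ m(1)] r by (simp add: abs_divide abs_minus_commute)
  next
    case False
    then have "i < j"
      using ij by simp
    have "j - i \<le> k j - k i" "k i < k j"
      using strict_mono_on_atMost_diff_le[where k=k and d=d and i=i and j=j, OF k] k[OF \<open>i < j\<close>] \<open>i < j\<close> ij
      by auto
    then have "k i + m \<le> k j" "r ^ k j < r ^ k i"
      using False r by (auto simp: m_def intro: power_strict_decreasing)
    then show ?thesis
      using power_ratio_le(2)[OF r _ m(1)] r by simp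
  qed
  also have "\<dots> \<le> (1 + m * \<eta>) / (m * \<eta>)"
    unfolding r_def using inverse_one_minus_power_le[of \<eta> m] \<eta> m by auto
  also have "\<dots> \<le> (5/3) / (m * \<eta>)"
  proof (rule divide_right_mono)
    have "real m * \<eta> \<le> real d * \<eta>"
      using m \<eta> by (intro mult_right_mono) auto
    then show "1 + m * \<eta> \<le> 5/3"
      using \<eta> by linarith
  qed (use \<eta> in simp)
  finally show ?thesis
    unfolding r_def m_def by (simp add: mult.commute)
qed

lemma prod_dist_atMost_eq_fact:
  assumes "i \<le> d"
  shows "(\<Prod>j\<in>{..d}-{i}. real (if j < i then i - j else j - i)) = fact i * fact (d - i)"
proof -
  have split: "{..d}-{i} = {..<i} \<union> {i<..d}"
    using assms by auto
  have "(\<Prod>j\<in>{..<i}. real (if j < i then i - j else j - i)) = (\<Prod>j\<in>{0..<i}. real (i - j))"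
    by (rule prod.cong) auto
  also have "\<dots> = fact i"
    by (simp add: fact_prod_rev of_nat_prod)
  finally have lower: "(\<Prod>j\<in>{..<i}. real (if j < i then i - j else j - i)) = fact i" .
  have "(\<Prod>j\<in>{i<..d}. real (if j < i then i - j else j - i)) = (\<Prod>l\<in>{0..<d-i}. real (Suc l))"
    by (rule prod.reindex_bij_witness[of _ "\<lambda>l. l + Suc i" "\<lambda>j. j - Suc i"]) auto
  also have "\<dots> = fact (d - i)"
    by (simp add: fact_prod_Suc of_nat_prod)
  finally have upper: "(\<Prod>j\<in>{i<..d}. real (if j < i then i - j else j - i)) = fact (d - i)" .
  show ?thesis
    unfolding split using lower upper by (subst prod.union_disjoint) auto
qed

lemma sum_inverse_fact_mult_fact: "(\<Sum>i\<le>d. 1 / (fact i * fact (d - i)) :: real) = 2 ^ d / fact d"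
proof -
  have "(\<Sum>i\<le>d. 1 / (fact i * fact (d - i)) :: real) = (\<Sum>i\<le>d. real (d choose i) / fact d)"
    by (intro sum.cong) (auto simp: binomial_fact field_simps)
  also have "\<dots> = 2 ^ d / fact d"
    by (simp add: choose_row_sum flip: sum_divide_distrib of_nat_sum)
  finally show ?thesis .
qed

lemma sum_lagrange_weights:
  fixes C :: real
  shows "(\<Sum>i\<le>d. \<Prod>j\<in>{..d}-{i}. C / real (if j < i then i - j else j - i)) = (2 * C) ^ d / fact d"
proof -
  have "(\<Sum>i\<le>d. \<Prod>j\<in>{..d}-{i}. C / real (if j < i then i - j else j - i))
      = (\<Sum>i\<le>d. C ^ d * (1 / (fact i * fact (d - i))))"
    by (intro sum.cong refl) (simp add: prod_dividef prod_dist_atMost_eq_fact)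
  also have "\<dots> = C ^ d * (\<Sum>i\<le>d. 1 / (fact i * fact (d - i)))"
    by (rule sum_distrib_left[symmetric])
  also have "\<dots> = (2 * C) ^ d / fact d"
    by (simp add: sum_inverse_fact_mult_fact power_mult_distrib)
  finally show ?thesis .
qed

lemma obtain_strict_mono_into_finite:
  fixes K :: "nat set"
  assumes "finite K" "d < card K"
  obtains k where "\<And>i. i \<le> d \<Longrightarrow> k i \<in> K" "\<And>i j. i < j \<Longrightarrow> j \<le> d \<Longrightarrow> k i < k j"
proof -
  obtain l where l: "sorted_wrt (<) l" "set l = K" "length l = card K"
    using finite_set_strict_sorted[OF assms(1)] by blast
  show ?thesis
  proof
    show "l ! i \<in> K" if "i \<le> d" for i
      using l assms(2) that by (metis nth_mem le_less_trans)
    show "l ! i < l ! j" if "i < j" "j \<le> d" for i j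
      using sorted_wrt_nth_less[OF l(1) that(1)] that l(3) assms(2) by linarith
  qed
qed

lemma poly_zero_le_geometric_nodes:
  fixes q :: "complex poly" and K :: "nat set" and \<eta> T :: real
  assumes q: "degree q \<le> d" and \<eta>: "0 < \<eta>" "\<eta> \<le> 2/3" "real d * \<eta> \<le> 2/3"
    and K: "finite K" "d < card K"
    and bound: "\<And>k. k \<in> K \<Longrightarrow> cmod (poly q (of_real ((1 - \<eta>) ^ k))) \<le> T"
  shows "cmod (poly q 0) \<le> T * (10 / (3 * \<eta>)) ^ d / fact d"
proof -
  obtain k where k_mem: "\<And>i. i \<le> d \<Longrightarrow> k i \<in> K" and k_mono: "\<And>i j. i < j \<Longrightarrow> j \<le> d \<Longrightarrow> k i < k j"
    using obtain_strict_mono_into_finite[OF K] by blast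
  define s where "s i = complex_of_real ((1 - \<eta>) ^ k i)" for i
  have inj: "inj_on s {..d}"
  proof (rule inj_onI)
    fix i j assume ij: "i \<in> {..d}" "j \<in> {..d}" "s i = s j"
    then have "(1 - \<eta>) ^ k i = (1 - \<eta>) ^ k j"
      unfolding s_def by (simp only: of_real_eq_iff)
    then have "k i = k j"
      using \<eta> by (simp add: power_inject_exp')
    then show "i = j"
      using k_mono ij by (metis atMost_iff less_irrefl linorder_neqE_nat)
  qed
  have "0 \<le> T"
    using bound[OF k_mem[of 0]] norm_ge_zero order_trans by blast
  have factor: "cmod ((0 - s j) / (s i - s j)) \<le> 5 / (3 * \<eta>) / real (if j < i then i - j else j - i)"
    if "i \<le> d" "j \<in> {..d}-{i}" for i j
  proof -
    have "(0 - s j) / (s i - s j) = complex_of_real (- ((1 - \<eta>) ^ k j / ((1 - \<eta>) ^ k i - (1 - \<eta>) ^ k j)))"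
      by (simp add: s_def)
    then have "cmod ((0 - s j) / (s i - s j)) = \<bar>(1 - \<eta>) ^ k j / ((1 - \<eta>) ^ k i - (1 - \<eta>) ^ k j)\<bar>"
      by (simp only: norm_of_real abs_minus_cancel)
    also have "\<dots> \<le> 5 / (3 * \<eta>) / real (if j < i then i - j else j - i)"
      using geometric_lagrange_factor_le[where k=k and d=d and i=i and j=j, OF \<eta> k_mono] that
      by (simp add: field_simps)
    finally show ?thesis .
  qed
  have "cmod (poly q 0) \<le> (\<Sum>i\<le>d. cmod (poly q (s i)) * (\<Prod>j\<in>{..d}-{i}. cmod ((0 - s j) / (s i - s j))))"
    unfolding poly_lagrange_interpolation[OF q inj, of 0]
    by (rule order_trans[OF norm_sum]) (simp only: norm_mult prod_norm order_refl)
  also have "\<dots> \<le> (\<Sum>i\<le>d. T * (\<Prod>j\<in>{..d}-{i}. 5 / (3 * \<eta>) / real (if j < i then i - j else j - i)))"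
    using bound[OF k_mem] factor \<open>0 \<le> T\<close>
    by (intro sum_mono mult_mono prod_mono conjI) (auto simp: s_def intro: prod_nonneg)
  also have "\<dots> = T * (2 * (5 / (3 * \<eta>))) ^ d / fact d"
    by (simp only: sum_lagrange_weights flip: sum_distrib_left times_divide_eq_right)
  also have "\<dots> = T * (10 / (3 * \<eta>)) ^ d / fact d"
    by simp
  finally show ?thesis .
qed

definition homothety :: "'a::real_vector \<Rightarrow> real \<Rightarrow> 'a \<Rightarrow> 'a" where
  "homothety x0 s y = s *\<^sub>R y + (1 - s) *\<^sub>R x0"

lemma homothety_eq: "homothety x0 s y = x0 + s *\<^sub>R (y - x0)"
  unfolding homothety_def by (simp add: algebra_simps)

lemma homothety_homothety: "homothety x0 a (homothety x0 b y) = homothety x0 (a * b) y"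
  unfolding homothety_def by (simp add: algebra_simps)

lemma homothety_1 [simp]: "homothety x0 1 y = y"
  unfolding homothety_def by simp

lemma inj_homothety: "s \<noteq> 0 \<Longrightarrow> inj (homothety x0 s)"
  unfolding homothety_def by (rule injI) simp

lemma homothety_image_eq_vimage:
  assumes "s \<noteq> 0"
  shows "homothety x0 s ` S = homothety x0 (1 / s) -` S"
proof
  show "homothety x0 s ` S \<subseteq> homothety x0 (1 / s) -` S"
    using assms by (auto simp: homothety_homothety)
  show "homothety x0 (1 / s) -` S \<subseteq> homothety x0 s ` S"
  proof
    fix x assume "x \<in> homothety x0 (1 / s) -` S"
    moreover have "x = homothety x0 s (homothety x0 (1 / s) x)"
      using assms by (simp add: homothety_homothety)
    ultimately show "x \<in> homothety x0 s ` S"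
      by blast
  qed
qed

lemma homothety_measurable:
  fixes x0 :: "'a::euclidean_space"
  assumes "s \<noteq> 0"
  shows "homothety x0 s \<in> lebesgue \<rightarrow>\<^sub>M lebesgue"
proof -
  have "(\<lambda>x. (1 - s) *\<^sub>R x0 + (\<Sum>j\<in>Basis. (s * (x \<bullet> j)) *\<^sub>R j)) = homothety x0 s"
    unfolding homothety_def scaleR_scaleR[symmetric] scaleR_sum_right[symmetric]
    by (auto simp add: euclidean_representation ac_simps)
  then show ?thesis
    using lebesgue_affine_measurable[of "\<lambda>_. s" "(1 - s) *\<^sub>R x0"] assms by simp
qed

lemma sets_homothety_vimage:
  fixes x0 :: "'a::euclidean_space"
  assumes "s \<noteq> 0" "S \<in> sets lebesgue"
  shows "homothety x0 s -` S \<in> sets lebesgue"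
  using measurable_sets[OF homothety_measurable[OF assms(1)] assms(2)] by simp

lemma sets_homothety_image:
  fixes x0 :: "'a::euclidean_space"
  assumes "s \<noteq> 0" "S \<in> sets lebesgue"
  shows "homothety x0 s ` S \<in> sets lebesgue"
  using sets_homothety_vimage[of "1 / s" S x0] assms by (simp add: homothety_image_eq_vimage)

lemma measure_homothety_image:
  fixes x0 :: "'a::euclidean_space"
  assumes "0 < s"
  shows "measure lebesgue (homothety x0 s ` S) = s ^ DIM('a) * measure lebesgue S"
proof -
  have "homothety x0 s = (\<lambda>x. s *\<^sub>R x + (1 - s) *\<^sub>R x0)"
    unfolding homothety_def by auto
  then show ?thesis
    using measure_lebesgue_affine[of s "(1 - s) *\<^sub>R x0" S] assms by simp
qed

lemma measure_Int_homothety_image_le: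
  fixes x0 :: "'a::euclidean_space"
  assumes "0 < s" "s \<le> 1"
  shows "measure lebesgue (E \<inter> homothety x0 s ` S) \<le> measure lebesgue (S \<inter> homothety x0 s -` E)"
proof -
  have "E \<inter> homothety x0 s ` S = homothety x0 s ` (S \<inter> homothety x0 s -` E)"
    by blast
  then have "measure lebesgue (E \<inter> homothety x0 s ` S) = s ^ DIM('a) * measure lebesgue (S \<inter> homothety x0 s -` E)"
    using measure_homothety_image[OF assms(1)] by simp
  also have "\<dots> \<le> measure lebesgue (S \<inter> homothety x0 s -` E)"
    using assms by (intro mult_left_le_one_le power_le_one) auto
  finally show ?thesis .
qed

lemma homothety_image_subset_convex:
  assumes "convex S" "x0 \<in> S" "0 \<le> s" "s \<le> 1"
  shows "homothety x0 s ` S \<subseteq> S"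
  using assms unfolding homothety_def by (auto intro: convexD)

lemma measure_Int_diff_eq_sum_shells:
  assumes C: "\<And>k. C (Suc k) \<subseteq> C k" "\<And>k. C k \<in> sets M" "C 0 \<in> fmeasurable M"
    and E: "E \<in> sets M"
  shows "measure M (E \<inter> (C 0 - C N)) = (\<Sum>k<N. measure M (E \<inter> (C k - C (Suc k))))"
proof (induction N)
  case (Suc N)
  have "C N \<subseteq> C 0"
    using lift_Suc_antimono_le[of C, OF C(1)] by simp
  then have split: "E \<inter> (C 0 - C (Suc N)) = E \<inter> (C 0 - C N) \<union> E \<inter> (C N - C (Suc N))"
    using C(1)[of N] by auto
  have "E \<inter> (C k - C l) \<in> fmeasurable M" if "C k \<subseteq> C 0" for k l
    using that C E by (intro fmeasurableI2[OF C(3)]) auto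
  then have "measure M (E \<inter> (C 0 - C (Suc N)))
      = measure M (E \<inter> (C 0 - C N)) + measure M (E \<inter> (C N - C (Suc N)))"
    unfolding split using \<open>C N \<subseteq> C 0\<close> by (intro measure_Union) (auto simp: fmeasurableD2)
  then show ?case
    using Suc by simp
qed simp

lemma sum_indicator_eq_card_mem:
  fixes N :: nat
  shows "(\<Sum>k<N. indicator (Z k) y :: real) = real (card {k\<in>{..<N}. y \<in> Z k})"
proof -
  have "(\<Sum>k<N. indicator (Z k) y :: real) = (\<Sum>k\<in>{k\<in>{..<N}. y \<in> Z k}. 1)"
    by (rule sum.mono_neutral_cong_right) (auto simp: indicator_def)
  then show ?thesis
    by simp
qed

lemma ex_card_mem_gt_of_sum_measure_gt:
  fixes Z :: "nat \<Rightarrow> 'a set"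
  assumes Z: "\<And>k. Z k \<subseteq> Y" "\<And>k. Z k \<in> sets M" and Y: "Y \<in> fmeasurable M"
    and less: "real d * measure M Y < (\<Sum>k<N. measure M (Z k))"
  shows "\<exists>y\<in>Y. d < card {k\<in>{..<N}. y \<in> Z k}"
proof (rule ccontr)
  assume "\<not> ?thesis"
  then have count: "card {k\<in>{..<N}. y \<in> Z k} \<le> d" if "y \<in> Y" for y
    using that by (simp add: not_less)
  have pointwise: "(\<Sum>k<N. indicator (Z k) y) \<le> real d * indicator Y y" for y
  proof (cases "y \<in> Y")
    case True
    then show ?thesis
      using count[OF True] by (simp add: sum_indicator_eq_card_mem)
  next
    case False
    then have "y \<notin> Z k" for k
      using Z(1) by blast
    then show ?thesis
      using False by simp
  qed
  have "Z k \<in> fmeasurable M" for k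
    using Z by (rule fmeasurableI2[OF Y])
  then have Z_integrable: "integrable M (indicator (Z k) :: 'a \<Rightarrow> real)" for k
    by (auto simp: fmeasurable_def intro: integrable_real_indicator)
  have Y_integrable: "integrable M (indicator Y :: 'a \<Rightarrow> real)"
    using Y by (auto simp: fmeasurable_def intro: integrable_real_indicator)
  have "(\<Sum>k<N. measure M (Z k)) = (\<integral>y. (\<Sum>k<N. indicator (Z k) y) \<partial>M)"
    using Z_integrable Z(2) by (simp add: Bochner_Integration.integral_sum sets.Int_space_eq2)
  also have "\<dots> \<le> (\<integral>y. real d * indicator Y y \<partial>M)"
    using Z_integrable Y_integrable pointwise by (intro integral_mono) auto
  also have "\<dots> = real d * measure M Y"
    using fmeasurableD[OF Y] by (simp add: sets.Int_space_eq2)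
  finally show False
    using less by simp
qed

lemma homothetic_copies_convex:
  fixes x0 :: "'a::euclidean_space" and B :: "'a set"
  assumes B: "convex B" "B \<in> fmeasurable lebesgue" and x0: "x0 \<in> B" and r: "0 < r" "r < 1"
  defines "C \<equiv> \<lambda>k. homothety x0 (r ^ k) ` B"
  shows "C k \<subseteq> B" and "C (Suc k) \<subseteq> C k" and "C k \<in> sets lebesgue"
    and "measure lebesgue (C k) = (r ^ DIM('a)) ^ k * measure lebesgue B"
    and "C k - C (Suc k) = homothety x0 (r ^ k) ` (B - C 1)"
proof -
  have rk: "0 < r ^ k" "r ^ k \<le> 1" for k
    using r by (auto simp: power_le_one)
  have C_sub: "C k \<subseteq> B" for k
    unfolding C_def using B(1) x0 rk[of k] by (intro homothety_image_subset_convex) auto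
  then show "C k \<subseteq> B" .
  have C_Suc: "C (Suc k) = homothety x0 (r ^ k) ` C 1"
    unfolding C_def image_image by (simp add: homothety_homothety mult.commute)
  then show "C (Suc k) \<subseteq> C k"
    using C_sub[of 1] by (auto simp: C_def)
  show "C k \<in> sets lebesgue"
    unfolding C_def using sets_homothety_image[of "r ^ k" B x0] B(2) r by auto
  have "measure lebesgue (C k) = (r ^ k) ^ DIM('a) * measure lebesgue B"
    unfolding C_def by (rule measure_homothety_image[OF rk(1)])
  then show "measure lebesgue (C k) = (r ^ DIM('a)) ^ k * measure lebesgue B"
    by (metis power_mult mult.commute)
  show "C k - C (Suc k) = homothety x0 (r ^ k) ` (B - C 1)"
    unfolding C_Suc image_set_diff[OF inj_homothety[OF rk(1)[THEN less_imp_neq, symmetric]]]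
    by (simp add: C_def)
qed

lemma ray_meets_set_at_geometric_points:
  fixes x0 :: "'a::euclidean_space" and E :: "'a set"
  assumes R: "0 < R" and x0: "x0 \<in> ball 0 R" and E: "E \<in> sets lebesgue" "E \<subseteq> ball 0 R"
    and \<mu>: "0 < \<mu>" and E_large: "\<mu> * measure lebesgue (ball (0::'a) R) \<le> measure lebesgue E"
    and r: "0 < r" "r < 1" and thin_shell: "real d * (1 - r ^ DIM('a)) < 3/4 * \<mu>"
  shows "\<exists>y K. finite K \<and> d < card K \<and> (\<forall>k\<in>K. homothety x0 (r ^ k) y \<in> E)"
proof -
  define B where "B = ball (0::'a) R"
  define \<beta> where "\<beta> = measure lebesgue B"
  define C where "C k = homothety x0 (r ^ k) ` B" for k
  define Y where "Y = B - C 1"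
  define Z where "Z k = Y \<inter> homothety x0 (r ^ k) -` E" for k
  have B: "convex B" "B \<in> fmeasurable lebesgue" "0 < \<beta>"
    unfolding B_def \<beta>_def using content_ball_pos[OF R, of 0] by auto
  note C = homothetic_copies_convex[OF B(1,2) x0[folded B_def] r, folded C_def \<beta>_def]
  have C0: "C 0 = B"
    by (simp add: C_def)
  have Y: "Y \<in> fmeasurable lebesgue" "measure lebesgue Y = (1 - r ^ DIM('a)) * \<beta>"
    unfolding Y_def using B(2) C(1,3,4)[of 1]
    by (auto simp: measurable_measure_Diff fmeasurable_Diff \<beta>_def algebra_simps)
  have "Z k \<in> sets lebesgue" for k
    unfolding Z_def using fmeasurableD[OF Y(1)] sets_homothety_vimage[OF _ E(1), of "r ^ k" x0] r by auto
  have shell_le: "measure lebesgue (E \<inter> (C k - C (Suc k))) \<le> measure lebesgue (Z k)" for k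
    using measure_Int_homothety_image_le[of "r ^ k" E x0 Y] r unfolding C(5) Z_def Y_def
    by (simp add: power_le_one)
  obtain N where N: "(r ^ DIM('a)) ^ N < \<mu> / 4"
    using real_arch_pow_inv[of "\<mu> / 4" "r ^ DIM('a)"] \<mu> r by (auto simp: power_less_one_iff)
  have "real d * measure lebesgue Y < 3/4 * \<mu> * \<beta>"
    unfolding Y(2) using thin_shell B(3) by (simp add: mult.assoc)
  also have "\<dots> \<le> measure lebesgue E - measure lebesgue (C N)"
  proof -
    have "(r ^ DIM('a)) ^ N * \<beta> \<le> \<mu> / 4 * \<beta>"
      using N B(3) by (intro mult_right_mono) auto
    then show ?thesis
      using E_large unfolding C(4) B_def \<beta>_def by linarith
  qed
  also have "\<dots> \<le> measure lebesgue (E - C N)"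
    using E C(1,3) by (intro measure_diff_le_measure_setdiff fmeasurableI2[OF B(2)]) (auto simp: B_def)
  also have "E - C N = E \<inter> (C 0 - C N)"
    using E(2) by (auto simp: C0 B_def)
  also have "measure lebesgue \<dots> = (\<Sum>k<N. measure lebesgue (E \<inter> (C k - C (Suc k))))"
    using C(2,3) B(2) E(1) by (intro measure_Int_diff_eq_sum_shells) (auto simp: C0)
  also have "\<dots> \<le> (\<Sum>k<N. measure lebesgue (Z k))"
    by (intro sum_mono shell_le)
  finally obtain y where y: "y \<in> Y" "d < card {k\<in>{..<N}. y \<in> Z k}"
    using ex_card_mem_gt_of_sum_measure_gt[of Z Y lebesgue d N] Y(1) \<open>\<And>k. Z k \<in> sets lebesgue\<close>
    by (auto simp: Z_def)
  then show ?thesis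
    by (intro exI[of _ y] exI[of _ "{k\<in>{..<N}. y \<in> Z k}"]) (auto simp: Z_def)
qed

lemma mpoly_restrict_to_line:
  fixes c :: "('n::finite \<Rightarrow> nat) \<Rightarrow> complex" and x0 v :: "real^'n"
  assumes fin: "finite (mpoly_support c)" and deg: "\<And>\<alpha>. \<alpha> \<in> mpoly_support c \<Longrightarrow> (\<Sum>i\<in>UNIV. \<alpha> i) \<le> d"
  obtains q where "degree q \<le> d" "\<And>s::real. poly q (of_real s) = mpoly_eval c (x0 + s *\<^sub>R v)"
proof
  define line where "line i = [:complex_of_real (x0 $ i), complex_of_real (v $ i):]" for i
  define q where "q = (\<Sum>\<alpha>\<in>mpoly_support c. smult (c \<alpha>) (\<Prod>i\<in>UNIV. line i ^ \<alpha> i))"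
  show "degree q \<le> d"
    unfolding q_def
  proof (rule degree_sum_le[OF fin])
    fix \<alpha> assume \<alpha>: "\<alpha> \<in> mpoly_support c"
    have "degree (\<Prod>i\<in>UNIV. line i ^ \<alpha> i) \<le> (\<Sum>i\<in>UNIV. degree (line i ^ \<alpha> i))"
      using degree_prod_sum_le[of "UNIV :: 'n set" "\<lambda>i. line i ^ \<alpha> i"] by (simp only: o_def finite)
    also have "\<dots> \<le> (\<Sum>i\<in>UNIV. \<alpha> i)"
    proof (rule sum_mono)
      fix i :: 'n
      have "degree (line i ^ \<alpha> i) \<le> degree (line i) * \<alpha> i"
        by (rule degree_power_le)
      also have "\<dots> \<le> \<alpha> i"
        by (simp add: line_def)
      finally show "degree (line i ^ \<alpha> i) \<le> \<alpha> i" .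
    qed
    also have "\<dots> \<le> d"
      using deg \<alpha> .
    finally show "degree (smult (c \<alpha>) (\<Prod>i\<in>UNIV. line i ^ \<alpha> i)) \<le> d"
      using degree_smult_le order_trans by blast
  qed
  show "poly q (of_real s) = mpoly_eval c (x0 + s *\<^sub>R v)" for s :: real
    unfolding q_def line_def mpoly_eval_def by (simp add: poly_sum poly_prod algebra_simps)
qed

lemma Suc_power_le_three_power_fact: "real (Suc d) ^ d \<le> 3 ^ d * fact d"
proof (induction d)
  case (Suc d)
  have "(1 + 1 / real (Suc d)) ^ Suc d \<le> 3"
    using exp_ge_one_plus_x_over_n_power_n[of "Suc d" 1] exp_le by simp
  moreover have "real (Suc (Suc d)) = (1 + 1 / real (Suc d)) * real (Suc d)"
    by (simp add: field_simps)
  then have "real (Suc (Suc d)) ^ Suc d = (1 + 1 / real (Suc d)) ^ Suc d * real (Suc d) ^ Suc d"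
    by (metis power_mult_distrib)
  ultimately have "real (Suc (Suc d)) ^ Suc d \<le> 3 * (real (Suc d) * real (Suc d) ^ d)"
    by (simp add: mult_right_mono)
  also have "\<dots> \<le> 3 * (real (Suc d) * (3 ^ d * fact d))"
    using Suc.IH by (intro mult_left_mono) auto
  also have "\<dots> = 3 ^ Suc d * fact (Suc d)"
    by (simp add: algebra_simps)
  finally show ?case .
qed simp

text \<open>The ratio \<open>r = 1 - \<eta>\<close> must be close enough to \<open>1\<close> that \<open>d\<close> thin shells cannot absorb a
  quarter of \<open>E\<close>, but not so close that the nodes \<open>r\<^sup>k\<close> crowd together; this \<open>\<eta>\<close> meets both.\<close>

lemma remez_step_size:
  fixes \<mu> :: real and n d :: nat
  assumes \<mu>: "0 < \<mu>" "\<mu> \<le> 1" and n: "1 \<le> n"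
  defines "\<eta> \<equiv> 2 * \<mu> / (3 * real n * (real d + 1))"
  shows "0 < \<eta>" "\<eta> \<le> 2/3" "real d * \<eta> \<le> 2/3"
    and "real d * (1 - (1 - \<eta>) ^ n) < 3/4 * \<mu>"
    and "(10 / (3 * \<eta>)) ^ d / fact d \<le> (15 * real n / \<mu>) ^ d"
proof -
  have "real n * \<eta> = (real n * (2 * \<mu>)) / (real n * (3 * (real d + 1)))"
    unfolding \<eta>_def by (simp add: mult_ac)
  also have "\<dots> = 2/3 * \<mu> / (real d + 1)"
    using n by simp
  finally have n_\<eta>: "real n * \<eta> = 2/3 * \<mu> / (real d + 1)" .
  show "0 < \<eta>"
    using \<mu> n unfolding \<eta>_def by simp
  have "real d * (real n * \<eta>) \<le> 2/3 * \<mu>" "real n * \<eta> \<le> 2/3 * \<mu>"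
    unfolding n_\<eta> using \<mu> by (simp_all add: field_simps)
  moreover have \<eta>_le: "\<eta> \<le> real n * \<eta>"
    using n \<open>0 < \<eta>\<close> by (simp add: mult_le_cancel_right1)
  moreover have "real d * \<eta> \<le> real d * (real n * \<eta>)"
    using \<eta>_le by (intro mult_left_mono) auto
  ultimately show "real d * \<eta> \<le> 2/3" "\<eta> \<le> 2/3"
    using \<mu> by (simp_all add: algebra_simps)
  have "1 - (1 - \<eta>) ^ n \<le> real n * \<eta>"
    using Bernoulli_inequality[of "- \<eta>" n] \<open>\<eta> \<le> 2/3\<close> by simp
  then have "real d * (1 - (1 - \<eta>) ^ n) \<le> real d * (real n * \<eta>)"
    by (intro mult_left_mono) auto
  also have "\<dots> < 3/4 * \<mu>"
    unfolding n_\<eta> using \<mu> by (simp add: field_simps add_nonneg_pos)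
  finally show "real d * (1 - (1 - \<eta>) ^ n) < 3/4 * \<mu>" .
  have "10 / (3 * \<eta>) = 5 * real n / \<mu> * real (Suc d)"
    using \<mu> n unfolding \<eta>_def by (simp add: field_simps)
  then have "(10 / (3 * \<eta>)) ^ d = (5 * real n / \<mu>) ^ d * real (Suc d) ^ d"
    by (simp only: power_mult_distrib)
  also have "\<dots> \<le> (5 * real n / \<mu>) ^ d * (3 ^ d * fact d)"
    using Suc_power_le_three_power_fact[of d] \<mu> by (intro mult_left_mono) auto
  also have "\<dots> = (15 * real n / \<mu>) ^ d * fact d"
    by (simp add: power_mult_distrib[symmetric])
  finally show "(10 / (3 * \<eta>)) ^ d / fact d \<le> (15 * real n / \<mu>) ^ d"
    by (simp add: divide_le_eq)
qed

lemma mpoly_norm_le_remez: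
  fixes c :: "('n::finite \<Rightarrow> nat) \<Rightarrow> complex" and x0 :: "real^'n" and E :: "(real^'n) set"
  assumes R: "0 < R" and x0: "x0 \<in> ball 0 R" and E: "E \<in> sets lebesgue" "E \<subseteq> ball 0 R"
    and \<mu>: "0 < \<mu>" "\<mu> \<le> 1" and E_large: "\<mu> * measure lebesgue (ball (0::real^'n) R) \<le> measure lebesgue E"
    and fin: "finite (mpoly_support c)" and deg: "\<And>\<alpha>. \<alpha> \<in> mpoly_support c \<Longrightarrow> (\<Sum>i\<in>UNIV. \<alpha> i) \<le> d"
    and bound: "\<And>x. x \<in> E \<Longrightarrow> cmod (mpoly_eval c x) \<le> T"
  shows "cmod (mpoly_eval c x0) \<le> T * (15 * real CARD('n) / \<mu>) ^ d"
proof -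
  define \<eta> where "\<eta> = 2 * \<mu> / (3 * real CARD('n) * (real d + 1))"
  have "1 \<le> CARD('n)"
    by simp
  note step = remez_step_size[OF \<mu> this, of d, folded \<eta>_def]
  obtain y K where K: "finite K" "d < card K" "\<And>k. k \<in> K \<Longrightarrow> homothety x0 ((1 - \<eta>) ^ k) y \<in> E"
    using ray_meets_set_at_geometric_points[OF R x0 E \<mu>(1) E_large, of "1 - \<eta>" d] step by auto
  obtain q where q: "degree q \<le> d" "\<And>s::real. poly q (of_real s) = mpoly_eval c (x0 + s *\<^sub>R (y - x0))"
    using mpoly_restrict_to_line[OF fin deg] by blast
  have "cmod (poly q (of_real ((1 - \<eta>) ^ k))) \<le> T" if "k \<in> K" for k
    using bound[OF K(3)[OF that], unfolded homothety_eq] unfolding q(2) .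
  then have zero: "cmod (poly q 0) \<le> T * (10 / (3 * \<eta>)) ^ d / fact d"
    using poly_zero_le_geometric_nodes[OF q(1) step(1-3) K(1,2)] by blast
  obtain k where "k \<in> K"
    using K(1,2) by (metis all_not_in_conv card.empty not_less0)
  then have "0 \<le> T"
    using bound[OF K(3)] norm_ge_zero order_trans by blast
  have "cmod (mpoly_eval c x0) = cmod (poly q 0)"
    using q(2)[of 0] by simp
  also have "\<dots> \<le> T * ((10 / (3 * \<eta>)) ^ d / fact d)"
    using zero by simp
  also have "\<dots> \<le> T * (15 * real CARD('n) / \<mu>) ^ d"
    using step(5) \<open>0 \<le> T\<close> by (rule mult_left_mono)
  finally show ?thesis .
qed

lemma continuous_on_mpoly_eval: "continuous_on UNIV (mpoly_eval c)"
  unfolding mpoly_eval_def by (intro continuous_intros)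

lemma set_integrable_continuous_bounded:
  fixes g :: "'a::euclidean_space \<Rightarrow> real"
  assumes g: "continuous_on UNIV g" and S: "S \<in> sets lebesgue" "bounded S"
  shows "set_integrable lebesgue S g"
proof -
  obtain x e where S_sub: "S \<subseteq> cball x e"
    using S(2) bounded_subset_cball by blast
  have "integrable lborel (\<lambda>y. indicator (cball x e) y *\<^sub>R g y)"
    by (rule borel_integrable_compact) (auto intro: continuous_on_subset[OF g])
  moreover have "(\<lambda>y. indicator (cball x e) y *\<^sub>R g y) \<in> borel_measurable lborel"
  proof -
    have "g \<in> borel_measurable lborel"
      using borel_measurable_continuous_onI[OF g] by simp
    then show ?thesis
      by (intro borel_measurable_scaleR borel_measurable_indicator) auto
  qed
  ultimately have "set_integrable lebesgue (cball x e) g"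
    unfolding set_integrable_def by (simp add: integrable_completion)
  then show ?thesis
    by (rule set_integrable_subset[OF _ S(1) S_sub])
qed

lemma set_integrable_mpoly_norm_sq:
  assumes "A \<in> sets lebesgue" "bounded A"
  shows "set_integrable lebesgue A (\<lambda>x. (cmod (mpoly_eval c x))\<^sup>2)"
  using assms by (intro set_integrable_continuous_bounded continuous_intros continuous_on_mpoly_eval)

lemma measure_sublevel_ge:
  fixes g :: "'a \<Rightarrow> real"
  assumes g: "set_integrable M A g" "g \<in> borel_measurable M" "\<And>x. x \<in> A \<Longrightarrow> 0 \<le> g x"
    and A: "A \<in> fmeasurable M" and c: "0 < c"
  shows "measure M A - (\<integral>x\<in>A. g x \<partial>M) / c \<le> measure M {x\<in>A. g x \<le> c}"
proof -
  have sets: "{x\<in>A. g x \<le> c} \<in> sets M" "{x\<in>A. c \<le> g x} \<in> sets M"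
    using fmeasurableD[OF A] g(2) by measurable
  have "measure M A \<le> measure M ({x\<in>A. g x \<le> c} \<union> {x\<in>A. c \<le> g x})"
    using sets by (intro measure_mono_fmeasurable fmeasurableD[OF A] fmeasurableI2[OF A]) auto
  also have "\<dots> \<le> measure M {x\<in>A. g x \<le> c} + measure M {x\<in>A. c \<le> g x}"
    using sets by (rule measure_Un_le)
  finally show ?thesis
    using integral_Markov_inequality'_measure[OF g(1) fmeasurableD[OF A] _ c] g(3) by auto
qed

lemma mpoly_norm_le_sublevel_remez:
  fixes c :: "('n::finite \<Rightarrow> nat) \<Rightarrow> complex" and A :: "(real^'n) set"
  assumes R: "0 < R" and A: "A \<in> sets lebesgue" "A \<subseteq> ball 0 R" "0 < measure lebesgue A"
    and fin: "finite (mpoly_support c)" and deg: "\<And>\<alpha>. \<alpha> \<in> mpoly_support c \<Longrightarrow> (\<Sum>i\<in>UNIV. \<alpha> i) \<le> d"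
    and x0: "x0 \<in> ball 0 R"
    and level: "4 * (LINT x:A|lebesgue. (cmod (mpoly_eval c x))\<^sup>2) / measure lebesgue A < level"
  shows "cmod (mpoly_eval c x0)
    \<le> sqrt level * (20 * real CARD('n) * measure lebesgue (ball (0::real^'n) R) / measure lebesgue A) ^ d"
proof -
  define g where "g x = (cmod (mpoly_eval c x))\<^sup>2" for x
  define E where "E = {x\<in>A. g x \<le> level}"
  define \<alpha> where "\<alpha> = measure lebesgue A"
  define \<beta> where "\<beta> = measure lebesgue (ball (0::real^'n) R)"
  have \<alpha>\<beta>: "0 < \<alpha>" "\<alpha> \<le> \<beta>"
    using A measure_mono_fmeasurable[OF A(2,1)] unfolding \<alpha>_def \<beta>_def by auto
  have g_int: "set_integrable lebesgue A g"
    unfolding g_def using A(1) bounded_subset[OF bounded_ball A(2)] by (rule set_integrable_mpoly_norm_sq)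
  have "continuous_on UNIV g"
    unfolding g_def by (intro continuous_intros continuous_on_mpoly_eval)
  then have g_meas: "g \<in> borel_measurable lebesgue"
    by (simp add: borel_measurable_continuous_onI measurable_completion)
  have "0 \<le> (LINT x:A|lebesgue. g x)"
    unfolding set_lebesgue_integral_def by (rule Bochner_Integration.integral_nonneg) (simp add: g_def)
  then have "0 < level"
    using level \<alpha>\<beta> unfolding g_def \<alpha>_def
    by (meson divide_nonneg_pos le_less_trans mult_nonneg_nonneg zero_le_numeral)
  have E_sets: "E \<in> sets lebesgue"
    unfolding E_def using A(1) g_meas by measurable
  have "\<alpha> - (LINT x:A|lebesgue. g x) / level \<le> measure lebesgue E"
    unfolding \<alpha>_def E_def using A(2) A(1)
    by (intro measure_sublevel_ge[OF g_int g_meas _ _ \<open>0 < level\<close>] fmeasurableI2[OF _ A(2) A(1)])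
      (auto simp: g_def)
  moreover have "(LINT x:A|lebesgue. g x) / level < \<alpha> / 4"
    using level \<alpha>\<beta> \<open>0 < level\<close> unfolding g_def \<alpha>_def by (simp add: field_simps)
  ultimately have E_large: "3 * \<alpha> / (4 * \<beta>) * \<beta> \<le> measure lebesgue E"
    using \<alpha>\<beta> by simp
  have bound: "cmod (mpoly_eval c x) \<le> sqrt level" if "x \<in> E" for x
    using that unfolding E_def g_def by (simp add: real_le_rsqrt)
  have \<mu>: "0 < 3 * \<alpha> / (4 * \<beta>)" "3 * \<alpha> / (4 * \<beta>) \<le> 1"
    using \<alpha>\<beta> by auto
  have "E \<subseteq> ball 0 R"
    using A(2) by (auto simp: E_def)
  then have "cmod (mpoly_eval c x0) \<le> sqrt level * (15 * real CARD('n) / (3 * \<alpha> / (4 * \<beta>))) ^ d"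
    using mpoly_norm_le_remez[OF R x0 E_sets _ \<mu>[unfolded \<beta>_def] E_large[unfolded \<beta>_def] fin deg bound]
    unfolding \<beta>_def by blast
  also have "15 * real CARD('n) / (3 * \<alpha> / (4 * \<beta>)) = 20 * real CARD('n) * \<beta> / \<alpha>"
    using \<alpha>\<beta> by (simp add: field_simps)
  finally show ?thesis
    unfolding \<alpha>_def \<beta>_def .
qed

lemma mpoly_norm_sq_le_L2:
  fixes c :: "('n::finite \<Rightarrow> nat) \<Rightarrow> complex" and A :: "(real^'n) set"
  assumes R: "0 < R" and A: "A \<in> sets lebesgue" "A \<subseteq> ball 0 R" "0 < measure lebesgue A"
    and fin: "finite (mpoly_support c)" and deg: "\<And>\<alpha>. \<alpha> \<in> mpoly_support c \<Longrightarrow> (\<Sum>i\<in>UNIV. \<alpha> i) \<le> d"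
    and x0: "x0 \<in> ball 0 R"
  defines "M \<equiv> (20 * real CARD('n) * measure lebesgue (ball (0::real^'n) R) / measure lebesgue A) ^ d"
  shows "(cmod (mpoly_eval c x0))\<^sup>2
    \<le> M\<^sup>2 * (4 * (LINT x:A|lebesgue. (cmod (mpoly_eval c x))\<^sup>2) / measure lebesgue A)"
proof -
  have "0 < M\<^sup>2"
    using A(3) R unfolding M_def by simp
  have "0 \<le> 4 * (LINT x:A|lebesgue. (cmod (mpoly_eval c x))\<^sup>2) / measure lebesgue A"
    unfolding set_lebesgue_integral_def
    by (intro divide_nonneg_nonneg mult_nonneg_nonneg Bochner_Integration.integral_nonneg) auto
  have "(cmod (mpoly_eval c x0))\<^sup>2 / M\<^sup>2 \<le> level"
    if "4 * (LINT x:A|lebesgue. (cmod (mpoly_eval c x))\<^sup>2) / measure lebesgue A < level" for level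
  proof -
    have "0 < level"
      using that \<open>0 \<le> 4 * _ / _\<close> by linarith
    have "(cmod (mpoly_eval c x0))\<^sup>2 \<le> (sqrt level * M)\<^sup>2"
      using mpoly_norm_le_sublevel_remez[OF R A fin deg x0 that] unfolding M_def
      by (intro power_mono) auto
    also have "\<dots> = level * M\<^sup>2"
      using \<open>0 < level\<close> by (simp add: power_mult_distrib)
    finally show ?thesis
      using \<open>0 < M\<^sup>2\<close> by (simp only: pos_divide_le_eq)
  qed
  then have "(cmod (mpoly_eval c x0))\<^sup>2 / M\<^sup>2
      \<le> 4 * (LINT x:A|lebesgue. (cmod (mpoly_eval c x))\<^sup>2) / measure lebesgue A"
    by (rule dense_ge)
  then show ?thesis
    using \<open>0 < M\<^sup>2\<close> by (simp only: pos_divide_le_eq mult.commute)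
qed

lemma mpoly_L2_norm_ball_le:
  fixes c :: "('n::finite \<Rightarrow> nat) \<Rightarrow> complex" and A :: "(real^'n) set"
  assumes R: "0 < R" and A: "A \<in> sets lebesgue" "A \<subseteq> ball 0 R" "0 < measure lebesgue A"
    and fin: "finite (mpoly_support c)" and deg: "\<And>\<alpha>. \<alpha> \<in> mpoly_support c \<Longrightarrow> (\<Sum>i\<in>UNIV. \<alpha> i) \<le> d"
  defines "\<alpha> \<equiv> measure lebesgue A" and "\<beta> \<equiv> measure lebesgue (ball (0::real^'n) R)"
  shows "L2_norm_on (ball 0 R) (mpoly_eval c)
    \<le> sqrt (4 * \<beta> / \<alpha>) * (20 * real CARD('n) * \<beta> / \<alpha>) ^ d * L2_norm_on A (mpoly_eval c)"
proof -
  define M where "M = (20 * real CARD('n) * \<beta> / \<alpha>) ^ d"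
  define S where "S = (LINT x:A|lebesgue. (cmod (mpoly_eval c x))\<^sup>2)"
  have \<alpha>\<beta>: "0 < \<alpha>" "0 < \<beta>"
    using A(3) content_ball_pos[OF R] unfolding \<alpha>_def \<beta>_def by auto
  have "0 \<le> S"
    unfolding S_def set_lebesgue_integral_def by (rule Bochner_Integration.integral_nonneg) simp
  have "(LINT x:ball 0 R|lebesgue. (cmod (mpoly_eval c x))\<^sup>2) \<le> (LINT x:ball (0::real^'n) R|lebesgue. M\<^sup>2 * (4 * S / \<alpha>))"
  proof (rule set_integral_mono)
    show "set_integrable lebesgue (ball 0 R) (\<lambda>x. (cmod (mpoly_eval c x))\<^sup>2)"
      by (rule set_integrable_mpoly_norm_sq) auto
    show "set_integrable lebesgue (ball (0::real^'n) R) (\<lambda>x. M\<^sup>2 * (4 * S / \<alpha>))"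
      by (intro set_integrable_continuous_bounded continuous_on_const) auto
    show "(cmod (mpoly_eval c x))\<^sup>2 \<le> M\<^sup>2 * (4 * S / \<alpha>)" if "x \<in> ball 0 R" for x
      using mpoly_norm_sq_le_L2[OF R A fin deg that] unfolding M_def S_def \<alpha>_def \<beta>_def .
  qed
  also have "\<dots> = \<beta> * (M\<^sup>2 * (4 * S / \<alpha>))"
    unfolding \<beta>_def using emeasure_lborel_ball_finite[of "0::real^'n" R] by (subst set_integral_const) auto
  also have "\<dots> = (sqrt (4 * \<beta> / \<alpha>) * M * sqrt S)\<^sup>2"
    using \<alpha>\<beta> \<open>0 \<le> S\<close> by (simp add: power_mult_distrib)
  finally show ?thesis
    unfolding L2_norm_on_def M_def S_def using \<alpha>\<beta> \<open>0 \<le> S\<close>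
    by (intro real_le_lsqrt) (auto simp: S_def)
qed

lemma root_one_minus_bounds:
  fixes a :: real and n :: nat
  assumes a: "0 < a" "a < 1" and n: "1 \<le> n"
  defines "t \<equiv> (1 - a) powr (1 / real n)"
  shows "1 - a \<le> t" "t < 1" "real n * (1 - t) * (1 - a) \<le> a"
proof -
  have "0 < t"
    unfolding t_def using a by simp
  have t_pow: "t ^ n = 1 - a"
    unfolding t_def using a n by (simp add: powr_powr flip: powr_realpow)
  show "t < 1"
    using t_pow a \<open>0 < t\<close> by (metis diff_less_eq less_add_same_cancel1 not_less one_le_power)
  then have "t ^ n \<le> t ^ 1"
    using \<open>0 < t\<close> n by (intro power_decreasing) auto
  then show "1 - a \<le> t"
    using t_pow by simp
  have "1 / (1 - (1 - (1 - t)) ^ n) \<le> (1 + n * (1 - t)) / (n * (1 - t))"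
    using \<open>0 < t\<close> \<open>t < 1\<close> n by (intro inverse_one_minus_power_le) auto
  then show "real n * (1 - t) * (1 - a) \<le> a"
    using t_pow a n \<open>t < 1\<close> by (simp add: field_simps)
qed

lemma remez_constant_le:
  fixes a :: real and n d :: nat
  assumes a: "0 < a" "a \<le> 1/4" and n: "1 \<le> n"
  defines "t \<equiv> (1 - a) powr (1 / real n)"
  shows "(5 * real n / a) ^ d \<le> 2 ^ (2 * d + 1) / sqrt 3 * ((1 + t) / (1 - t)) ^ d"
proof -
  note t = root_one_minus_bounds[OF a(1) _ n, folded t_def]
  have "real n * (1 - t) * (3/4) \<le> real n * (1 - t) * (1 - a)"
    using t a by (intro mult_left_mono) auto
  then have "5 * real n * (1 - t) \<le> 7 * a"
    using t(3) a by linarith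
  then have "5 * real n / a \<le> 4 * ((7/4) / (1 - t))"
    using a t by (simp add: field_simps)
  also have "\<dots> \<le> 4 * ((1 + t) / (1 - t))"
    using a t by (intro mult_left_mono divide_right_mono) auto
  finally have "(5 * real n / a) ^ d \<le> (4 * ((1 + t) / (1 - t))) ^ d"
    using a by (intro power_mono) auto
  also have "\<dots> = 2 ^ (2 * d) * ((1 + t) / (1 - t)) ^ d"
    unfolding power_mult_distrib power_mult by simp
  also have "\<dots> \<le> 2 ^ (2 * d + 1) / sqrt 3 * ((1 + t) / (1 - t)) ^ d"
  proof (rule mult_right_mono)
    have "sqrt 3 \<le> 2"
      by (rule real_le_lsqrt) auto
    then show "2 ^ (2 * d) \<le> 2 ^ (2 * d + 1) / sqrt 3"
      by (simp add: le_divide_eq)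
    show "0 \<le> ((1 + t) / (1 - t)) ^ d"
      using t a by simp
  qed
  finally show ?thesis .
qed

lemma L2_norm_on_nonneg: "0 \<le> L2_norm_on A f"
  unfolding L2_norm_on_def set_lebesgue_integral_def
  by (intro real_sqrt_ge_zero Bochner_Integration.integral_nonneg) simp

lemma sum_le_mpoly_degree:
  assumes "finite (mpoly_support c)" "\<alpha> \<in> mpoly_support c"
  shows "(\<Sum>i\<in>UNIV. \<alpha> i) \<le> mpoly_degree c"
  using assms unfolding mpoly_degree_def by (auto intro: Max_ge)

theorem mainTheorem13:
  fixes \<omega> :: "(real^'n) set" and R :: real and c :: "('n \<Rightarrow> nat) \<Rightarrow> complex" and d :: nat
  assumes "R > 0"
    and "\<omega> \<in> sets lebesgue"
    and "measure lebesgue (\<omega> \<inter> ball 0 R) > 0"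
    and "finite (mpoly_support c)" and "mpoly_support c \<noteq> {}"
    and "mpoly_degree c = d"
  shows "L2_norm_on (ball 0 R) (mpoly_eval c)
    \<le> 2 ^ (2 * d + 1) / sqrt 3
       * sqrt (4 * measure lebesgue (ball (0::real^'n) R) / measure lebesgue (\<omega> \<inter> ball 0 R))
       * ((1 + (1 - measure lebesgue (\<omega> \<inter> ball 0 R) / (4 * measure lebesgue (ball (0::real^'n) R))) powr (1 / real CARD('n)))
          / (1 - (1 - measure lebesgue (\<omega> \<inter> ball 0 R) / (4 * measure lebesgue (ball (0::real^'n) R))) powr (1 / real CARD('n)))) ^ d
       * L2_norm_on (\<omega> \<inter> ball 0 R) (mpoly_eval c)"
proof -
  define \<alpha> where "\<alpha> = measure lebesgue (\<omega> \<inter> ball 0 R)"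
  define \<beta> where "\<beta> = measure lebesgue (ball (0::real^'n) R)"
  define a where "a = \<alpha> / (4 * \<beta>)"
  have \<alpha>\<beta>: "0 < \<alpha>" "\<alpha> \<le> \<beta>"
    using assms(2,3) measure_mono_fmeasurable[of "\<omega> \<inter> ball 0 R" "ball 0 R" lebesgue]
    unfolding \<alpha>_def \<beta>_def by auto
  then have a: "0 < a" "a \<le> 1/4"
    unfolding a_def by (auto simp: field_simps)
  have A: "\<omega> \<inter> ball 0 R \<in> sets lebesgue" "\<omega> \<inter> ball 0 R \<subseteq> ball 0 R"
    using assms(2) fmeasurableD[OF lmeasurable_ball] by auto
  have "L2_norm_on (ball 0 R) (mpoly_eval c)
      \<le> sqrt (4 * \<beta> / \<alpha>) * (20 * real CARD('n) * \<beta> / \<alpha>) ^ d * L2_norm_on (\<omega> \<inter> ball 0 R) (mpoly_eval c)"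
    using mpoly_L2_norm_ball_le[OF assms(1) A assms(3,4) sum_le_mpoly_degree[OF assms(4)]] assms(6)
    unfolding \<alpha>_def \<beta>_def by simp
  also have "20 * real CARD('n) * \<beta> / \<alpha> = 5 * real CARD('n) / a"
    unfolding a_def using \<alpha>\<beta> by (simp add: field_simps)
  also have "sqrt (4 * \<beta> / \<alpha>) * (5 * real CARD('n) / a) ^ d * L2_norm_on (\<omega> \<inter> ball 0 R) (mpoly_eval c)
      \<le> sqrt (4 * \<beta> / \<alpha>) * (2 ^ (2 * d + 1) / sqrt 3 * ((1 + (1 - a) powr (1 / real CARD('n)))
      / (1 - (1 - a) powr (1 / real CARD('n)))) ^ d) * L2_norm_on (\<omega> \<inter> ball 0 R) (mpoly_eval c)"
    using remez_constant_le[OF a, of "CARD('n)" d] L2_norm_on_nonneg \<alpha>\<beta>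
    by (intro mult_right_mono mult_left_mono) auto
  finally show ?thesis
    unfolding \<alpha>_def \<beta>_def a_def by (simp only: mult_ac)
qed

end
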